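(* Let $P>0$, $\sigma^2>0$, $\mathrm{SNR}=P/\sigma^2$, $C=\frac12\log(1+\mathrm{SNR})$, and let $0<R<C$. Put $\theta=\theta(R)$ and $\alpha^*=\alpha^*(\theta(R))$. For each $n$, let $\mathbf b$ be uniformly distributed on the sphere $\{\mathbf x\in\mathbb R^n:\|\mathbf x\|=\sqrt{nP}\}$, let $\mathbf z$ be independent of $\mathbf b$ with i.i.d. $N(0,\sigma^2)$ components, and set $$\mathbf z_{\mathrm{eff}}=\frac{1-\alpha^*}{\alpha^*}\,\mathbf b+\mathbf z .$$ Then $$e^{-nE_{\mathrm{sp}}(R;\mathrm{SNR})}\doteq \Pr\Big(\|\mathbf z_{\mathrm{eff}}\|\ge \frac{\sqrt{nP}}{\alpha^*}\sin\theta(R)\Big).$$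
   Context: All logarithms are natural; rates are in nats. For positive sequences, $f(n)\doteq g(n)$ means $\frac1n\log\frac{f(n)}{g(n)}\to0$; $f\,\dot\le\, g$ means $\limsup_n\frac1n\log\frac{f(n)}{g(n)}\le0$; $f\,\dot\ge\, g$ means $g\,\dot\le\, f$. For $R>0$, $\theta(R)\in(0,\pi/2]$ is defined by $\sin\theta(R)=e^{-R}$. For $\theta\in(0,\pi/2)$, $\alpha^*(\theta)=\Big[\tfrac12\big(1+\sqrt{1+\tfrac{4}{\mathrm{SNR}\cos^2\theta}}\big)\Big]^{-1}$. The sphere-packing exponent is $E_{\mathrm{sp}}(R;\mathrm{SNR})=E_G(\beta_G,\rho_G)$, where $E_G(\beta,\rho)=\frac12\big[(1-\beta)(1+\rho)+\mathrm{SNR}+\rho\log\beta+\log(\beta-\frac{\mathrm{SNR}}{1+\rho})-2\rho R\big]$, $\beta_G=e^{2R}$, and $\rho_G=\frac{\mathrm{SNR}}{2\beta_G}\Big(1+\sqrt{1+\frac{4\beta_G}{\mathrm{SNR}(\beta_G-1)}}\Big)-1$. *)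

theory Defs
  imports "HOL-Probability.Probability"
begin

(* Vectors in R^n are functions nat => real, extensional on {..<n}, i.e. the
   carrier of the product measure space PiM {..<n} (%_. lborel). *)

definition enorm :: "nat \<Rightarrow> (nat \<Rightarrow> real) \<Rightarrow> real" where
  "enorm n x = sqrt (\<Sum>i<n. (x i)\<^sup>2)"

definition lebesgue_n :: "nat \<Rightarrow> (nat \<Rightarrow> real) measure" where
  "lebesgue_n n = PiM {..<n} (\<lambda>_. lborel)"

(* uniform (normalized surface = cone) measure on the sphere of radius r in R^n:
   radial projection of the uniform distribution on the closed unit ball *)
definition sphere_uniform :: "nat \<Rightarrow> real \<Rightarrow> (nat \<Rightarrow> real) measure" where
  "sphere_uniform n r =
     distr (uniform_measure (lebesgue_n n) {x \<in> space (lebesgue_n n). enorm n x \<le> 1})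
           (lebesgue_n n)
           (\<lambda>x. restrict (\<lambda>i. r * x i / enorm n x) {..<n})"

definition gauss_vec :: "nat \<Rightarrow> real \<Rightarrow> (nat \<Rightarrow> real) measure" where
  "gauss_vec n \<sigma>2 = PiM {..<n} (\<lambda>_. density lborel (normal_density 0 (sqrt \<sigma>2)))"

definition exp_equiv :: "(nat \<Rightarrow> real) \<Rightarrow> (nat \<Rightarrow> real) \<Rightarrow> bool" where
  "exp_equiv f g \<longleftrightarrow> (\<forall>\<^sub>F n in sequentially. f n > 0 \<and> g n > 0) \<and>
     ((\<lambda>n. ln (f n / g n) / real n) \<longlonglongrightarrow> 0)"

definition theta :: "real \<Rightarrow> real" where
  "theta R = arcsin (exp (- R))"

definition alpha_star :: "real \<Rightarrow> real \<Rightarrow> real" where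
  "alpha_star snr \<theta> = inverse ((1 + sqrt (1 + 4 / (snr * (cos \<theta>)\<^sup>2))) / 2)"

definition E_G :: "real \<Rightarrow> real \<Rightarrow> real \<Rightarrow> real \<Rightarrow> real" where
  "E_G snr R \<beta> \<rho> = ((1 - \<beta>) * (1 + \<rho>) + snr + \<rho> * ln \<beta> + ln (\<beta> - snr / (1 + \<rho>)) - 2 * \<rho> * R) / 2"

definition beta_G :: "real \<Rightarrow> real" where
  "beta_G R = exp (2 * R)"

definition rho_G :: "real \<Rightarrow> real \<Rightarrow> real" where
  "rho_G snr R = snr / (2 * beta_G R) * (1 + sqrt (1 + 4 * beta_G R / (snr * (beta_G R - 1)))) - 1"

definition E_sp :: "real \<Rightarrow> real \<Rightarrow> real" where
  "E_sp R snr = E_G snr R (beta_G R) (rho_G snr R)"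

end

theory Submission
  imports Defs
begin

text \<open>Given \<open>b\<close> on the sphere, \<open>\<parallel>c b + z\<parallel>\<^sup>2\<close> with \<open>c = (1 - \<alpha>) / \<alpha>\<close> is a scaled noncentral
  chi-square variable with noncentrality \<open>n c\<^sup>2 P\<close>, whose law does not depend on \<open>b\<close>; its moment generating
  function is \<open>exp (n \<phi>(t))\<close> with \<open>\<phi> = noncentral_cgf \<sigma>\<^sup>2 (c\<^sup>2 P)\<close>. For the threshold
  \<open>\<parallel>c b + z\<parallel>\<^sup>2 \<ge> n T\<close>, Chernoff's bound at the saddle point \<open>\<phi>'(t\<^sub>s) = T\<close> gives the upper
  bound \<open>exp (- n (t\<^sub>s T - \<phi>(t\<^sub>s)))\<close>; the matching lower bound, up to \<open>exp (- n \<epsilon>)\<close>, comes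
  from splitting the MGF at a slightly larger tilt and using strict convexity of \<open>\<phi>\<close>.
  For \<open>\<alpha> = \<alpha>*(\<theta>(R))\<close> the saddle point is explicit and \<open>t\<^sub>s T - \<phi>(t\<^sub>s) = E\<^sub>s\<^sub>p(R; SNR)\<close>.\<close>

lemma nn_integral_normal_density:
  "\<sigma> > 0 \<Longrightarrow> (\<integral>\<^sup>+x. ennreal (normal_density \<mu> \<sigma> x) \<partial>lborel) = 1"
  by (subst nn_integral_eq_integral) auto

lemma exp_square_mult_normal_density:
  fixes q t a m x :: real
  assumes q: "q > 0" and u: "1 - 2*t*q\<^sup>2 > 0"
  defines "u \<equiv> 1 - 2*t*q\<^sup>2"
  shows "exp (t*(a+x)\<^sup>2) * normal_density m q x =
         exp (t*(a+m)\<^sup>2/u) / sqrt u * normal_density ((a+m)/u - a) (q / sqrt u) x"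
proof -
  have up: "u > 0" using u u_def by simp
  have q2: "(q / sqrt u)\<^sup>2 = q\<^sup>2/u" using up by (simp add: power_divide)
  have square: "t*(a+x)\<^sup>2 + (-(x-m)\<^sup>2/(2*q\<^sup>2)) = t*(a+m)\<^sup>2/u + (-(x-((a+m)/u - a))\<^sup>2/(2*(q/sqrt u)\<^sup>2))"
  proof -
    have tq: "t = (1-u)/(2*q\<^sup>2)" using q unfolding u_def by simp
    have "x - ((a+m)/u - a) = ((x+a)*u - (a+m))/u" using up by (simp add: field_simps)
    then show ?thesis unfolding q2 tq using up q
      by (simp add: field_simps power2_eq_square)
  qed
  have const: "1 / sqrt (2*pi*q\<^sup>2) = 1 / sqrt u * (1 / sqrt (2*pi*(q/sqrt u)\<^sup>2))"
    unfolding q2 using up q by (simp add: real_sqrt_divide real_sqrt_mult field_simps)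
  have "exp (t*(a+x)\<^sup>2) * normal_density m q x = 1 / sqrt (2*pi*q\<^sup>2) * exp (t*(a+x)\<^sup>2 + (-(x-m)\<^sup>2/(2*q\<^sup>2)))"
    unfolding normal_density_def exp_add by simp
  also have "\<dots> = 1 / sqrt u * (1 / sqrt (2*pi*(q/sqrt u)\<^sup>2)) * (exp (t*(a+m)\<^sup>2/u) * exp (-(x-((a+m)/u - a))\<^sup>2/(2*(q/sqrt u)\<^sup>2)))"
    unfolding square const exp_add ..
  also have "\<dots> = exp (t*(a+m)\<^sup>2/u) / sqrt u * normal_density ((a+m)/u - a) (q / sqrt u) x"
    unfolding normal_density_def by simp
  finally show ?thesis .
qed

lemma nn_integral_exp_square_normal:
  fixes q t a m :: real
  assumes q: "q > 0" and u: "1 - 2*t*q\<^sup>2 > 0"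
  shows "(\<integral>\<^sup>+x. ennreal (exp (t*(a+x)\<^sup>2)) \<partial>density lborel (normal_density m q))
          = ennreal (exp (t*(a+m)\<^sup>2/(1 - 2*t*q\<^sup>2)) / sqrt (1 - 2*t*q\<^sup>2))"
proof -
  define u where "u = 1 - 2*t*q\<^sup>2"
  have up: "u > 0" using u u_def by simp
  have "(\<integral>\<^sup>+x. ennreal (exp (t*(a+x)\<^sup>2)) \<partial>density lborel (normal_density m q))
     = (\<integral>\<^sup>+x. ennreal (exp (t*(a+x)\<^sup>2) * normal_density m q x) \<partial>lborel)"
    by (subst nn_integral_density) (auto simp: ennreal_mult' mult.commute)
  also have "\<dots> = (\<integral>\<^sup>+x. ennreal (exp (t*(a+m)\<^sup>2/u) / sqrt u) * ennreal (normal_density ((a+m)/u - a) (q / sqrt u) x) \<partial>lborel)"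
    unfolding exp_square_mult_normal_density[OF q u] u_def[symmetric]
    using up by (intro nn_integral_cong) (subst ennreal_mult[symmetric]; simp)
  also have "\<dots> = ennreal (exp (t*(a+m)\<^sup>2/u) / sqrt u)"
    using up q by (simp add: nn_integral_cmult nn_integral_normal_density)
  finally show ?thesis unfolding u_def .
qed

definition noncentral_cgf :: "real \<Rightarrow> real \<Rightarrow> real \<Rightarrow> real" where
  "noncentral_cgf \<sigma>2 A t = t * A / (1 - 2*t*\<sigma>2) - ln (1 - 2*t*\<sigma>2) / 2"

definition noncentral_cgf_deriv :: "real \<Rightarrow> real \<Rightarrow> real \<Rightarrow> real" where
  "noncentral_cgf_deriv \<sigma>2 A t = A / (1 - 2*t*\<sigma>2)\<^sup>2 + \<sigma>2 / (1 - 2*t*\<sigma>2)"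

lemma sets_gauss_vec [measurable_cong]: "sets (gauss_vec n \<sigma>2) = sets (lebesgue_n n)"
  unfolding gauss_vec_def lebesgue_n_def by (intro sets_PiM_cong) auto

lemma prob_space_gauss_vec: "\<sigma>2 > 0 \<Longrightarrow> prob_space (gauss_vec n \<sigma>2)"
  unfolding gauss_vec_def by (intro prob_space_PiM prob_space_normal_density) simp

lemma nn_integral_gauss_vec_exp_norm:
  fixes \<sigma>2 t A :: real and a :: "nat \<Rightarrow> real"
  assumes q: "\<sigma>2 > 0" and u: "1 - 2*t*\<sigma>2 > 0" and a: "(\<Sum>i<n. (a i)\<^sup>2) = real n * A"
  shows "(\<integral>\<^sup>+z. ennreal (exp (t * (\<Sum>i<n. (a i + z i)\<^sup>2))) \<partial>gauss_vec n \<sigma>2)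
          = ennreal (exp (real n * noncentral_cgf \<sigma>2 A t))"
proof -
  let ?N = "\<lambda>_::nat. density lborel (normal_density 0 (sqrt \<sigma>2))"
  let ?u = "1 - 2*t*\<sigma>2"
  interpret product_sigma_finite ?N
    unfolding product_sigma_finite_def
    using prob_space_normal_density[of "sqrt \<sigma>2" 0] prob_space_imp_sigma_finite q by auto
  have coordinate: "(\<integral>\<^sup>+x. ennreal (exp (t*(a i + x)\<^sup>2)) \<partial>?N i)
      = ennreal (exp (t*(a i)\<^sup>2/?u - ln ?u / 2))" for i
  proof -
    have "sqrt ?u = exp (ln ?u / 2)" using u by (simp add: ln_sqrt[symmetric])
    then show ?thesis
      using nn_integral_exp_square_normal[where q="sqrt \<sigma>2" and t=t and a="a i" and m=0] q u by (simp add: exp_diff)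
  qed
  have "(\<integral>\<^sup>+z. ennreal (exp (t * (\<Sum>i<n. (a i + z i)\<^sup>2))) \<partial>gauss_vec n \<sigma>2)
      = (\<integral>\<^sup>+z. (\<Prod>i<n. ennreal (exp (t*(a i + z i)\<^sup>2))) \<partial>gauss_vec n \<sigma>2)"
    by (simp add: sum_distrib_left exp_sum prod_ennreal)
  also have "\<dots> = (\<Prod>i<n. \<integral>\<^sup>+x. ennreal (exp (t*(a i + x)\<^sup>2)) \<partial>?N i)"
    unfolding gauss_vec_def by (rule product_nn_integral_prod) auto
  also have "\<dots> = ennreal (exp (\<Sum>i<n. t*(a i)\<^sup>2/?u - ln ?u / 2))"
    unfolding coordinate by (simp add: prod_ennreal exp_sum)
  also have "(\<Sum>i<n. t*(a i)\<^sup>2/?u - ln ?u / 2) = real n * noncentral_cgf \<sigma>2 A t"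
    unfolding noncentral_cgf_def sum_subtractf sum_divide_distrib[symmetric]
      sum_distrib_left[symmetric] a by (simp add: algebra_simps)
  finally show ?thesis .
qed

lemma borel_measurable_sum_square_shift [measurable]:
  "(\<lambda>z. \<Sum>i<n. (a i + z i)\<^sup>2 :: real) \<in> borel_measurable (lebesgue_n n)"
  unfolding lebesgue_n_def by measurable

lemma gauss_vec_tail_upper:
  fixes \<sigma>2 t A T :: real and a :: "nat \<Rightarrow> real"
  assumes q: "\<sigma>2 > 0" and u: "1 - 2*t*\<sigma>2 > 0" and t: "t \<ge> 0"
    and a: "(\<Sum>i<n. (a i)\<^sup>2) = real n * A"
  shows "measure (gauss_vec n \<sigma>2) {z \<in> space (gauss_vec n \<sigma>2). real n * T \<le> (\<Sum>i<n. (a i + z i)\<^sup>2)}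
         \<le> exp (- real n * (t * T - noncentral_cgf \<sigma>2 A t))"
proof -
  interpret G: prob_space "gauss_vec n \<sigma>2" using prob_space_gauss_vec[OF q] .
  let ?S = "\<lambda>z. \<Sum>i<n. (a i + z i)\<^sup>2"
  let ?E = "{z \<in> space (gauss_vec n \<sigma>2). real n * T \<le> ?S z}"
  have markov: "indicator ?E z \<le> ennreal (exp (- t * (real n * T))) * ennreal (exp (t * ?S z))" for z
  proof (cases "real n * T \<le> ?S z")
    case True
    then have "1 \<le> exp (- t * (real n * T)) * exp (t * ?S z)"
      using t by (simp add: exp_add[symmetric] mult_left_mono)
    then show ?thesis by (simp add: indicator_def ennreal_mult[symmetric])
  qed (simp add: indicator_def)
  have "emeasure (gauss_vec n \<sigma>2) ?E = (\<integral>\<^sup>+z. indicator ?E z \<partial>gauss_vec n \<sigma>2)"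
    by (subst nn_integral_indicator) auto
  also have "\<dots> \<le> (\<integral>\<^sup>+z. ennreal (exp (- t * (real n * T))) * ennreal (exp (t * ?S z)) \<partial>gauss_vec n \<sigma>2)"
    by (intro nn_integral_mono markov)
  also have "\<dots> = ennreal (exp (- t * (real n * T))) * ennreal (exp (real n * noncentral_cgf \<sigma>2 A t))"
    by (simp add: nn_integral_cmult nn_integral_gauss_vec_exp_norm[OF q u a])
  also have "\<dots> = ennreal (exp (- real n * (t * T - noncentral_cgf \<sigma>2 A t)))"
    by (simp add: ennreal_mult[symmetric] exp_add[symmetric] algebra_simps)
  finally show ?thesis by (simp add: G.emeasure_eq_measure)
qed

text \<open>Split the MGF at tilt \<open>t\<close> according to whether the squared norm lies below \<open>X\<close>,
  in \<open>[X, Y]\<close> or above \<open>Y\<close>; the outer parts are controlled by the MGF at \<open>t - h\<close> and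
  \<open>t + h\<close>.\<close>

lemma exp_mult_le_split:
  fixes t h s X Y :: real
  assumes t: "t \<ge> 0" and h: "h \<ge> 0"
  shows "exp (t * s) \<le> exp (h*X) * exp ((t-h) * s) + exp (t*Y) * of_bool (X \<le> s)
      + exp (-h*Y) * exp ((t+h) * s)"
proof -
  consider "s < X" | "X \<le> s" "s \<le> Y" | "Y < s" by linarith
  then show ?thesis
  proof cases
    case 1
    then have "h * s \<le> h * X" using h by (intro mult_left_mono) auto
    then have "exp (t * s) \<le> exp (h*X) * exp ((t-h) * s)"
      unfolding exp_add[symmetric] by (simp add: algebra_simps)
    then show ?thesis by (smt (verit) exp_gt_zero of_bool_eq(1) of_bool_eq(2) mult_nonneg_nonneg)
  next
    case 2
    then have "exp (t * s) \<le> exp (t*Y) * of_bool (X \<le> s)" using t by (simp add: mult_left_mono)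
    then show ?thesis by (smt (verit) exp_gt_zero mult_pos_pos)
  next
    case 3
    then have "h * Y \<le> h * s" using h by (intro mult_left_mono) auto
    then have "exp (t * s) \<le> exp (-h*Y) * exp ((t+h) * s)"
      unfolding exp_add[symmetric] by (simp add: algebra_simps)
    then show ?thesis by (smt (verit) exp_gt_zero of_bool_eq(1) of_bool_eq(2) mult_nonneg_nonneg)
  qed
qed

lemma gauss_vec_mgf_le_split:
  fixes \<sigma>2 t h X Y A :: real and a :: "nat \<Rightarrow> real"
  assumes q: "\<sigma>2 > 0" and t: "t \<ge> 0" and h: "h \<ge> 0" and u: "1 - 2*(t+h)*\<sigma>2 > 0"
    and a: "(\<Sum>i<n. (a i)\<^sup>2) = real n * A"
  shows "exp (real n * noncentral_cgf \<sigma>2 A t)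
     \<le> exp (h*X + real n * noncentral_cgf \<sigma>2 A (t-h))
     + exp (t*Y) * measure (gauss_vec n \<sigma>2) {z \<in> space (gauss_vec n \<sigma>2). X \<le> (\<Sum>i<n. (a i + z i)\<^sup>2)}
     + exp (real n * noncentral_cgf \<sigma>2 A (t+h) - h*Y)"
proof -
  interpret G: prob_space "gauss_vec n \<sigma>2" using prob_space_gauss_vec[OF q] .
  let ?G = "gauss_vec n \<sigma>2"
  let ?S = "\<lambda>z. \<Sum>i<n. (a i + z i)\<^sup>2"
  let ?E = "{z \<in> space ?G. X \<le> ?S z}"
  let ?cgf = "noncentral_cgf \<sigma>2 A"
  have ut: "1 - 2*t*\<sigma>2 > 0" and uh: "1 - 2*(t-h)*\<sigma>2 > 0"
    using u q h by (smt (verit) mult_right_mono)+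
  have "ennreal (exp (real n * ?cgf t)) = (\<integral>\<^sup>+z. ennreal (exp (t * ?S z)) \<partial>?G)"
    by (rule nn_integral_gauss_vec_exp_norm[OF q ut a, symmetric])
  also have "\<dots> \<le> (\<integral>\<^sup>+z. ennreal (exp (h*X)) * ennreal (exp ((t-h) * ?S z))
      + ennreal (exp (t*Y)) * indicator ?E z + ennreal (exp (-h*Y)) * ennreal (exp ((t+h) * ?S z)) \<partial>?G)"
  proof (intro nn_integral_mono)
    fix z assume "z \<in> space ?G"
    then show "ennreal (exp (t * ?S z)) \<le> ennreal (exp (h*X)) * ennreal (exp ((t-h) * ?S z))
      + ennreal (exp (t*Y)) * indicator ?E z + ennreal (exp (-h*Y)) * ennreal (exp ((t+h) * ?S z))"
      using exp_mult_le_split[OF t h, of "?S z" X Y] by (auto simp: indicator_def ennreal_mult[symmetric] ennreal_plus[symmetric]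
          simp del: ennreal_plus intro!: ennreal_leI)
  qed
  also have "\<dots> = ennreal (exp (h*X)) * ennreal (exp (real n * ?cgf (t-h)))
      + ennreal (exp (t*Y)) * emeasure ?G ?E + ennreal (exp (-h*Y)) * ennreal (exp (real n * ?cgf (t+h)))"
    by (simp add: nn_integral_add nn_integral_cmult nn_integral_cmult_indicator
        nn_integral_gauss_vec_exp_norm[OF q uh a] nn_integral_gauss_vec_exp_norm[OF q u a])
  also have "\<dots> = ennreal (exp (h*X + real n * ?cgf (t-h)) + exp (t*Y) * measure ?G ?E
      + exp (real n * ?cgf (t+h) - h*Y))"
    by (simp add: G.emeasure_eq_measure ennreal_mult[symmetric] ennreal_plus[symmetric] exp_add exp_diff
        exp_minus field_simps del: ennreal_plus)
  finally show ?thesis by (subst (asm) ennreal_le_iff) auto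
qed

lemma gauss_vec_tail_lower:
  fixes \<sigma>2 t h T T' A :: real and a :: "nat \<Rightarrow> real"
  assumes q: "\<sigma>2 > 0" and t: "t \<ge> 0" and h: "h \<ge> 0" and u: "1 - 2*(t+h)*\<sigma>2 > 0"
    and a: "(\<Sum>i<n. (a i)\<^sup>2) = real n * A"
    and small: "exp (real n * (h*T + noncentral_cgf \<sigma>2 A (t-h) - noncentral_cgf \<sigma>2 A t))
             + exp (real n * (noncentral_cgf \<sigma>2 A (t+h) - noncentral_cgf \<sigma>2 A t - h*T')) \<le> 1/2"
  shows "exp (- real n * (t*T' - noncentral_cgf \<sigma>2 A t)) / 2
     \<le> measure (gauss_vec n \<sigma>2) {z \<in> space (gauss_vec n \<sigma>2). real n * T \<le> (\<Sum>i<n. (a i + z i)\<^sup>2)}"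
    (is "_ \<le> ?p")
proof -
  let ?cgf = "noncentral_cgf \<sigma>2 A"
  define M where "M = exp (real n * ?cgf t)"
  define e1 where "e1 = exp (real n * (h*T + ?cgf (t-h) - ?cgf t))"
  define e2 where "e2 = exp (real n * (?cgf (t+h) - ?cgf t - h*T'))"
  have "M \<le> M * e1 + exp (t * (real n * T')) * ?p + M * e2"
    using gauss_vec_mgf_le_split[OF q t h u a, of "real n * T" "real n * T'"]
    unfolding M_def e1_def e2_def exp_add[symmetric] by (simp add: algebra_simps)
  moreover have "M * (e1 + e2) \<le> M / 2"
    using small unfolding e1_def e2_def M_def by (simp add: mult_left_mono[of _ "1/2", simplified])
  ultimately have "M / 2 \<le> exp (t * (real n * T')) * ?p"
    by (simp add: distrib_left)
  then have "M * exp (- (t * (real n * T'))) / 2 \<le> ?p"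
    by (simp add: exp_minus field_simps)
  moreover have "M * exp (- (t * (real n * T'))) = exp (- real n * (t*T' - ?cgf t))"
    unfolding M_def exp_add[symmetric] by (simp add: algebra_simps)
  ultimately show ?thesis by simp
qed

lemma space_lebesgue_n: "space (lebesgue_n n) = PiE {..<n} (\<lambda>_. UNIV)"
  unfolding lebesgue_n_def by (simp add: space_PiM)

lemma borel_measurable_enorm [measurable]: "enorm n \<in> borel_measurable (lebesgue_n n)"
  unfolding enorm_def[abs_def] lebesgue_n_def by measurable

lemma enorm_nonneg: "0 \<le> enorm n x"
  unfolding enorm_def by (simp add: sum_nonneg)

lemma enorm_square: "(enorm n x)\<^sup>2 = (\<Sum>i<n. (x i)\<^sup>2)"
  unfolding enorm_def by (simp add: sum_nonneg)

lemma component_square_le_enorm_square: "i < n \<Longrightarrow> (x i)\<^sup>2 \<le> (enorm n x)\<^sup>2"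
  unfolding enorm_square by (auto intro!: member_le_sum)

abbreviation unit_ball_n :: "nat \<Rightarrow> (nat \<Rightarrow> real) set" where
  "unit_ball_n n \<equiv> {x \<in> space (lebesgue_n n). enorm n x \<le> 1}"

lemma sets_unit_ball_n: "unit_ball_n n \<in> sets (lebesgue_n n)"
  by measurable

lemma emeasure_unit_ball_n_finite: "emeasure (lebesgue_n n) (unit_ball_n n) \<noteq> \<infinity>"
proof -
  interpret product_sigma_finite "\<lambda>_::nat. lborel" by standard
  have "unit_ball_n n \<subseteq> PiE {..<n} (\<lambda>_. {-1..1})"
  proof
    fix x assume x: "x \<in> unit_ball_n n"
    have "(enorm n x)\<^sup>2 \<le> 1" using x enorm_nonneg[of n x] by (simp add: power_le_one)
    then have "(x i)\<^sup>2 \<le> 1\<^sup>2" if "i < n" for i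
      using component_square_le_enorm_square[OF that, of x] by simp
    then have "\<bar>x i\<bar> \<le> 1" if "i < n" for i
      using that abs_le_square_iff[of "x i" 1] by (simp del: abs_le_square_iff)
    then show "x \<in> PiE {..<n} (\<lambda>_. {-1..1})"
      using x by (auto simp: space_lebesgue_n PiE_def Pi_def abs_le_iff)
  qed
  then have "emeasure (lebesgue_n n) (unit_ball_n n) \<le> emeasure (lebesgue_n n) (PiE {..<n} (\<lambda>_. {-1..1}))"
    by (intro emeasure_mono) (auto simp: lebesgue_n_def)
  also have "\<dots> = (\<Prod>i<n. emeasure lborel {-1..1::real})"
    unfolding lebesgue_n_def by (rule emeasure_PiM) auto
  also have "\<dots> < \<infinity>" by (simp add: less_top[symmetric] power_eq_top_ennreal)
  finally show ?thesis by simp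
qed

lemma emeasure_unit_ball_n_pos:
  assumes "n \<ge> 1" shows "emeasure (lebesgue_n n) (unit_ball_n n) \<noteq> 0"
proof -
  interpret product_sigma_finite "\<lambda>_::nat. lborel" by standard
  define e where "e = 1 / sqrt n"
  have e: "e > 0" "e\<^sup>2 = 1 / n" using assms by (auto simp: e_def power_divide)
  have "PiE {..<n} (\<lambda>_. {-e..e}) \<subseteq> unit_ball_n n"
  proof
    fix x assume x: "x \<in> PiE {..<n} (\<lambda>_. {-e..e})"
    have "(\<Sum>i<n. (x i)\<^sup>2) \<le> (\<Sum>i<n. e\<^sup>2)"
    proof (rule sum_mono)
      fix i assume "i \<in> {..<n}"
      then have "\<bar>x i\<bar> \<le> e" using x by (auto simp: PiE_def Pi_def abs_le_iff)
      then show "(x i)\<^sup>2 \<le> e\<^sup>2" by (metis abs_ge_zero power2_abs power_mono)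
    qed
    also have "\<dots> = 1" using e assms by simp
    finally show "x \<in> unit_ball_n n"
      using x by (auto simp: space_lebesgue_n enorm_def PiE_def)
  qed
  then have le: "emeasure (lebesgue_n n) (PiE {..<n} (\<lambda>_. {-e..e})) \<le> emeasure (lebesgue_n n) (unit_ball_n n)"
    by (intro emeasure_mono sets_unit_ball_n)
  have "emeasure (lebesgue_n n) (PiE {..<n} (\<lambda>_. {-e..e})) = (\<Prod>i<n. emeasure lborel {-e..e})"
    unfolding lebesgue_n_def by (rule emeasure_PiM) auto
  also have "\<dots> = ennreal ((2*e)^n)" using e by (simp add: ennreal_power)
  finally have "0 < emeasure (lebesgue_n n) (PiE {..<n} (\<lambda>_. {-e..e}))" using e by simp
  then show ?thesis using le by (auto simp: zero_less_iff_neq_zero)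
qed

lemma AE_enorm_nonzero:
  assumes "n \<ge> 1" shows "AE x in lebesgue_n n. enorm n x \<noteq> 0"
proof -
  interpret product_sigma_finite "\<lambda>_::nat. lborel" by standard
  have "emeasure (lebesgue_n n) (PiE {..<n} (\<lambda>_. {0})) = (\<Prod>i<n. emeasure lborel {0::real})"
    unfolding lebesgue_n_def by (rule emeasure_PiM) auto
  also have "\<dots> = 0" using assms by (simp add: prod_zero_iff)
  moreover have "PiE {..<n} (\<lambda>_. {0::real}) \<in> sets (lebesgue_n n)"
    unfolding lebesgue_n_def by (rule sets_PiM_I_finite) auto
  ultimately have null: "PiE {..<n} (\<lambda>_. {0::real}) \<in> null_sets (lebesgue_n n)"
    by (simp add: null_sets_def)
  show ?thesis
  proof (rule AE_I'[OF null], rule subsetI)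
    fix x assume "x \<in> {x \<in> space (lebesgue_n n). \<not> enorm n x \<noteq> 0}"
    then have x: "x \<in> space (lebesgue_n n)" "enorm n x = 0" by auto
    have "x i = 0" if "i < n" for i using component_square_le_enorm_square[OF that, of x] x by simp
    then show "x \<in> PiE {..<n} (\<lambda>_. {0})" using x(1) unfolding space_lebesgue_n PiE_iff by auto
  qed
qed

lemma measurable_radial_projection:
  "(\<lambda>x. restrict (\<lambda>i. r * x i / enorm n x) {..<n}) \<in> measurable (lebesgue_n n) (lebesgue_n n)"
proof -
  have "(\<lambda>x. \<lambda>i\<in>{..<n}. r * x i / enorm n x) \<in> measurable (lebesgue_n n) (PiM {..<n} (\<lambda>_. lborel))"
  proof (rule measurable_restrict)
    fix i assume "i \<in> {..<n}"
    show "(\<lambda>x. r * x i / enorm n x) \<in> measurable (lebesgue_n n) lborel"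
      using \<open>i \<in> {..<n}\<close> borel_measurable_enorm[of n] unfolding lebesgue_n_def by measurable
  qed
  then show ?thesis by (simp add: lebesgue_n_def)
qed

lemma sets_sphere_uniform [measurable_cong]: "sets (sphere_uniform n r) = sets (lebesgue_n n)"
  unfolding sphere_uniform_def by simp

lemma prob_space_sphere_uniform:
  assumes "n \<ge> 1" shows "prob_space (sphere_uniform n r)"
proof -
  interpret U: prob_space "uniform_measure (lebesgue_n n) (unit_ball_n n)"
    using emeasure_unit_ball_n_pos[OF assms] emeasure_unit_ball_n_finite
    by (intro prob_space_uniform_measure) auto
  show ?thesis unfolding sphere_uniform_def
    by (rule U.prob_space_distr)
       (subst measurable_cong_sets[OF sets_uniform_measure refl], rule measurable_radial_projection)
qed

lemma AE_sphere_uniform: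
  assumes n: "n \<ge> 1" and r: "r \<ge> 0"
  shows "AE b in sphere_uniform n r. (\<Sum>i<n. (b i)\<^sup>2) = r\<^sup>2"
proof -
  let ?f = "\<lambda>x. restrict (\<lambda>i. r * x i / enorm n x) {..<n}"
  have on_sphere: "(\<Sum>i<n. (r * x i / enorm n x)\<^sup>2) = r\<^sup>2" if "enorm n x \<noteq> 0" for x
  proof -
    have "(\<Sum>i<n. (r * x i / enorm n x)\<^sup>2) = r\<^sup>2 * (\<Sum>i<n. (x i)\<^sup>2) / (enorm n x)\<^sup>2"
      by (simp add: power_divide power_mult_distrib sum_divide_distrib[symmetric] sum_distrib_left)
    then show ?thesis using that by (simp add: enorm_square[symmetric])
  qed
  have "AE x in uniform_measure (lebesgue_n n) (unit_ball_n n). (\<Sum>i<n. (?f x i)\<^sup>2) = r\<^sup>2"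
  proof (rule AE_uniform_measureI)
    show "unit_ball_n n \<in> sets (lebesgue_n n)" by (rule sets_unit_ball_n)
    show "AE x in lebesgue_n n. x \<in> unit_ball_n n \<longrightarrow> (\<Sum>i<n. (?f x i)\<^sup>2) = r\<^sup>2"
      using AE_enorm_nonzero[OF n] by (rule eventually_mono) (simp add: on_sphere)
  qed
  moreover have "?f \<in> measurable (uniform_measure (lebesgue_n n) (unit_ball_n n)) (lebesgue_n n)"
    by (subst measurable_cong_sets[OF sets_uniform_measure refl]) (rule measurable_radial_projection)
  moreover have "{b \<in> space (lebesgue_n n). (\<Sum>i<n. (b i)\<^sup>2) = r\<^sup>2} \<in> sets (lebesgue_n n)"
    unfolding lebesgue_n_def by measurable
  ultimately show ?thesis unfolding sphere_uniform_def by (simp only: AE_distr_iff)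
qed

lemma measure_pair_measure_bounds:
  assumes M: "prob_space M" and N: "prob_space N" and A: "A \<in> sets (M \<Otimes>\<^sub>M N)"
    and lo: "0 \<le> lo" and hi: "0 \<le> hi"
    and ae: "AE x in M. lo \<le> measure N (Pair x -` A) \<and> measure N (Pair x -` A) \<le> hi"
  shows "lo \<le> measure (M \<Otimes>\<^sub>M N) A \<and> measure (M \<Otimes>\<^sub>M N) A \<le> hi"
proof -
  interpret M: prob_space M by (rule M)
  interpret N: prob_space N by (rule N)
  interpret MN: pair_prob_space M N ..
  have eq: "emeasure (M \<Otimes>\<^sub>M N) A = (\<integral>\<^sup>+x. ennreal (measure N (Pair x -` A)) \<partial>M)"
    by (subst N.emeasure_pair_measure_alt[OF A]) (simp add: N.emeasure_eq_measure)
  have "(\<integral>\<^sup>+x. ennreal lo \<partial>M) \<le> (\<integral>\<^sup>+x. ennreal (measure N (Pair x -` A)) \<partial>M)"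
    by (intro nn_integral_mono_AE eventually_mono[OF ae] ennreal_leI) auto
  then have l: "ennreal lo \<le> ennreal (measure (M \<Otimes>\<^sub>M N) A)"
    using eq by (simp add: MN.emeasure_eq_measure M.emeasure_space_1)
  have "(\<integral>\<^sup>+x. ennreal (measure N (Pair x -` A)) \<partial>M) \<le> (\<integral>\<^sup>+x. ennreal hi \<partial>M)"
    by (intro nn_integral_mono_AE eventually_mono[OF ae] ennreal_leI) auto
  then have h: "ennreal (measure (M \<Otimes>\<^sub>M N) A) \<le> ennreal hi"
    using eq by (simp add: MN.emeasure_eq_measure M.emeasure_space_1)
  have "lo \<le> measure (M \<Otimes>\<^sub>M N) A" using l by (subst (asm) ennreal_le_iff) simp_all
  moreover have "measure (M \<Otimes>\<^sub>M N) A \<le> hi" using h hi by (subst (asm) ennreal_le_iff)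
  ultimately show ?thesis ..
qed

definition tail_set :: "nat \<Rightarrow> real \<Rightarrow> real \<Rightarrow> real \<Rightarrow> real \<Rightarrow> ((nat \<Rightarrow> real) \<times> (nat \<Rightarrow> real)) set" where
  "tail_set n P \<sigma>2 c k = {(b, z) \<in> space (sphere_uniform n (sqrt (real n * P)) \<Otimes>\<^sub>M gauss_vec n \<sigma>2).
     enorm n (\<lambda>i. c * b i + z i) \<ge> k}"

lemma sets_tail_set:
  "tail_set n P \<sigma>2 c k \<in> sets (sphere_uniform n (sqrt (real n * P)) \<Otimes>\<^sub>M gauss_vec n \<sigma>2)"
proof -
  have [measurable]: "(\<lambda>p. enorm n (\<lambda>i. c * fst p i + snd p i)) \<in> borel_measurable (lebesgue_n n \<Otimes>\<^sub>M lebesgue_n n)"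
    unfolding enorm_def lebesgue_n_def by measurable
  have sets: "sets (sphere_uniform n (sqrt (real n * P)) \<Otimes>\<^sub>M gauss_vec n \<sigma>2) = sets (lebesgue_n n \<Otimes>\<^sub>M lebesgue_n n)"
    by (intro sets_pair_measure_cong sets_sphere_uniform sets_gauss_vec)
  have "tail_set n P \<sigma>2 c k = {p \<in> space (lebesgue_n n \<Otimes>\<^sub>M lebesgue_n n). k \<le> enorm n (\<lambda>i. c * fst p i + snd p i)}"
    unfolding tail_set_def using sets_eq_imp_space_eq[OF sets] by auto
  also have "\<dots> \<in> sets (lebesgue_n n \<Otimes>\<^sub>M lebesgue_n n)" by measurable
  finally show ?thesis unfolding sets .
qed

lemma vimage_Pair_tail_set:
  assumes b: "b \<in> space (sphere_uniform n (sqrt (real n * P)))" and k: "k \<ge> 0"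
  shows "Pair b -` tail_set n P \<sigma>2 c k = {z \<in> space (gauss_vec n \<sigma>2). k\<^sup>2 \<le> (\<Sum>i<n. (c * b i + z i)\<^sup>2)}"
proof -
  have "k \<le> enorm n (\<lambda>i. c * b i + z i) \<longleftrightarrow> k\<^sup>2 \<le> (\<Sum>i<n. (c * b i + z i)\<^sup>2)" for z
    using k by (metis enorm_def real_sqrt_le_iff real_sqrt_unique zero_le_power2)
  then show ?thesis using b by (auto simp: tail_set_def space_pair_measure)
qed

text \<open>On the sphere \<open>\<parallel>c b\<parallel>\<^sup>2 = n c\<^sup>2 P\<close> does not depend on \<open>b\<close>, so the Gaussian tail bounds hold
  uniformly for the sections and integrate to bounds on the joint probability.\<close>

lemma AE_sphere_uniform_scaled:
  assumes "n \<ge> 1" and "P \<ge> 0"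
  shows "AE b in sphere_uniform n (sqrt (real n * P)). (\<Sum>i<n. (c * b i)\<^sup>2) = real n * (c\<^sup>2 * P)"
proof -
  have "AE b in sphere_uniform n (sqrt (real n * P)). (\<Sum>i<n. (b i)\<^sup>2) = (sqrt (real n * P))\<^sup>2"
    using assms by (intro AE_sphere_uniform) auto
  then show ?thesis
    by eventually_elim (use assms in \<open>simp add: power_mult_distrib sum_distrib_left[symmetric]\<close>)
qed

lemma measure_tail_set_upper:
  assumes q: "\<sigma>2 > 0" and P: "P \<ge> 0" and n: "n \<ge> 1" and T: "T \<ge> 0"
    and u: "1 - 2*t*\<sigma>2 > 0" and t: "t \<ge> 0"
  shows "measure (sphere_uniform n (sqrt (real n * P)) \<Otimes>\<^sub>M gauss_vec n \<sigma>2) (tail_set n P \<sigma>2 c (sqrt (real n * T)))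
         \<le> exp (- real n * (t*T - noncentral_cgf \<sigma>2 (c\<^sup>2*P) t))"
proof -
  have k: "sqrt (real n * T) \<ge> 0" "(sqrt (real n * T))\<^sup>2 = real n * T" using T by simp_all
  have "AE b in sphere_uniform n (sqrt (real n * P)).
      0 \<le> measure (gauss_vec n \<sigma>2) (Pair b -` tail_set n P \<sigma>2 c (sqrt (real n * T))) \<and>
      measure (gauss_vec n \<sigma>2) (Pair b -` tail_set n P \<sigma>2 c (sqrt (real n * T)))
        \<le> exp (- real n * (t*T - noncentral_cgf \<sigma>2 (c\<^sup>2*P) t))"
    using AE_sphere_uniform_scaled[OF n P, of c] AE_space
  proof eventually_elim
    case (elim b)
    then show ?case
      unfolding vimage_Pair_tail_set[OF elim(2) k(1)] k(2)
      using gauss_vec_tail_upper[OF q u t, of "\<lambda>i. c * b i"] by simp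
  qed
  then show ?thesis
    using measure_pair_measure_bounds[OF prob_space_sphere_uniform[OF n] prob_space_gauss_vec[OF q]
        sets_tail_set, of 0]
    by simp
qed

lemma measure_tail_set_lower:
  assumes q: "\<sigma>2 > 0" and P: "P \<ge> 0" and n: "n \<ge> 1" and T: "T \<ge> 0"
    and t: "t \<ge> 0" and h: "h \<ge> 0" and u: "1 - 2*(t+h)*\<sigma>2 > 0"
    and small: "exp (real n * (h*T + noncentral_cgf \<sigma>2 (c\<^sup>2*P) (t-h) - noncentral_cgf \<sigma>2 (c\<^sup>2*P) t))
             + exp (real n * (noncentral_cgf \<sigma>2 (c\<^sup>2*P) (t+h) - noncentral_cgf \<sigma>2 (c\<^sup>2*P) t - h*T')) \<le> 1/2"
  shows "exp (- real n * (t*T' - noncentral_cgf \<sigma>2 (c\<^sup>2*P) t)) / 2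
     \<le> measure (sphere_uniform n (sqrt (real n * P)) \<Otimes>\<^sub>M gauss_vec n \<sigma>2) (tail_set n P \<sigma>2 c (sqrt (real n * T)))"
proof -
  interpret G: prob_space "gauss_vec n \<sigma>2" by (rule prob_space_gauss_vec[OF q])
  have k: "sqrt (real n * T) \<ge> 0" "(sqrt (real n * T))\<^sup>2 = real n * T" using T by simp_all
  have "AE b in sphere_uniform n (sqrt (real n * P)).
      exp (- real n * (t*T' - noncentral_cgf \<sigma>2 (c\<^sup>2*P) t)) / 2
        \<le> measure (gauss_vec n \<sigma>2) (Pair b -` tail_set n P \<sigma>2 c (sqrt (real n * T))) \<and>
      measure (gauss_vec n \<sigma>2) (Pair b -` tail_set n P \<sigma>2 c (sqrt (real n * T))) \<le> 1"
    using AE_sphere_uniform_scaled[OF n P, of c] AE_space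
  proof eventually_elim
    case (elim b)
    then show ?case
      unfolding vimage_Pair_tail_set[OF elim(2) k(1)] k(2)
      using gauss_vec_tail_lower[OF q t h u, of "\<lambda>i. c * b i"] small by simp
  qed
  then show ?thesis
    using measure_pair_measure_bounds[OF prob_space_sphere_uniform[OF n] prob_space_gauss_vec[OF q]
        sets_tail_set, of "exp (- real n * (t*T' - noncentral_cgf \<sigma>2 (c\<^sup>2*P) t)) / 2" 1]
    by simp
qed

lemma noncentral_cgf_has_real_derivative:
  assumes u: "1 - 2*t*\<sigma>2 > 0"
  shows "(noncentral_cgf \<sigma>2 A has_real_derivative noncentral_cgf_deriv \<sigma>2 A t) (at t)"
proof -
  have "2 * (\<sigma>2 * t) \<noteq> 1" "4 - 8*(t*\<sigma>2) \<noteq> 0" "2 - 4*(t*\<sigma>2) \<noteq> 0" using u by (auto simp: mult_ac)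
  then have "((\<lambda>t. t * A / (1 - 2*t*\<sigma>2) - ln (1 - 2*t*\<sigma>2) / 2) has_real_derivative
      (A * (1 - 2*t*\<sigma>2) + t*A * (2*\<sigma>2)) / (1 - 2*t*\<sigma>2)\<^sup>2 + (2*\<sigma>2) / (1 - 2*t*\<sigma>2) / 2) (at t)"
    using u by (auto intro!: derivative_eq_intros simp: power2_eq_square field_simps)
  moreover have "(A * (1 - 2*t*\<sigma>2) + t*A * (2*\<sigma>2)) / (1 - 2*t*\<sigma>2)\<^sup>2 + (2*\<sigma>2) / (1 - 2*t*\<sigma>2) / 2
      = noncentral_cgf_deriv \<sigma>2 A t"
    unfolding noncentral_cgf_deriv_def using u by (simp add: field_simps)
  ultimately show ?thesis unfolding noncentral_cgf_def[abs_def] by simp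
qed

lemma noncentral_cgf_deriv_strict_mono:
  assumes q: "\<sigma>2 > 0" and A: "A \<ge> 0" and vt: "v < t" and u: "1 - 2*t*\<sigma>2 > 0"
  shows "noncentral_cgf_deriv \<sigma>2 A v < noncentral_cgf_deriv \<sigma>2 A t"
proof -
  define x where "x = 1 - 2*t*\<sigma>2"
  define y where "y = 1 - 2 * v * \<sigma>2"
  have x: "0 < x" and xy: "x < y" using u vt q unfolding x_def y_def by simp_all
  have "\<sigma>2 / y < \<sigma>2 / x" using xy q x by (intro divide_strict_left_mono) auto
  moreover have "A / y\<^sup>2 \<le> A / x\<^sup>2" using xy x A by (intro divide_left_mono power_mono) auto
  ultimately show ?thesis unfolding noncentral_cgf_deriv_def x_def[symmetric] y_def[symmetric] by simp
qed

lemma noncentral_cgf_increment_bounds: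
  assumes q: "\<sigma>2 > 0" and A: "A \<ge> 0" and vt: "v < t" and u: "1 - 2*t*\<sigma>2 > 0"
  shows "(t - v) * noncentral_cgf_deriv \<sigma>2 A v < noncentral_cgf \<sigma>2 A t - noncentral_cgf \<sigma>2 A v"
    and "noncentral_cgf \<sigma>2 A t - noncentral_cgf \<sigma>2 A v < (t - v) * noncentral_cgf_deriv \<sigma>2 A t"
proof -
  have ux: "1 - 2*x*\<sigma>2 > 0" if "x \<le> t" for x
    using u q that by (smt (verit) mult_right_mono)
  obtain z where z: "v < z" "z < t"
    and mvt: "noncentral_cgf \<sigma>2 A t - noncentral_cgf \<sigma>2 A v = (t - v) * noncentral_cgf_deriv \<sigma>2 A z"
    using MVT2[OF vt noncentral_cgf_has_real_derivative[OF ux]] by blast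
  show "(t - v) * noncentral_cgf_deriv \<sigma>2 A v < noncentral_cgf \<sigma>2 A t - noncentral_cgf \<sigma>2 A v"
    unfolding mvt using noncentral_cgf_deriv_strict_mono[OF q A z(1) ux] z vt by simp
  show "noncentral_cgf \<sigma>2 A t - noncentral_cgf \<sigma>2 A v < (t - v) * noncentral_cgf_deriv \<sigma>2 A t"
    unfolding mvt using noncentral_cgf_deriv_strict_mono[OF q A z(2) u] z vt by simp
qed

text \<open>The tilt \<open>t = t\<^sub>s + h\<close> and threshold \<open>T' = \<phi>'(t\<^sub>s + 2h)\<close> for small \<open>h > 0\<close>: by strict
  convexity both side terms of the MGF split are exponentially small, while the exponent
  \<open>t T' - \<phi>(t)\<close> is within \<open>\<epsilon>\<close> of the saddle-point exponent by continuity.\<close>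

lemma obtain_tilt_near_saddle_point:
  fixes \<sigma>2 A ts \<epsilon> :: real
  assumes q: "\<sigma>2 > 0" and A: "A \<ge> 0" and ts: "ts \<ge> 0" and uts: "1 - 2*ts*\<sigma>2 > 0" and e: "\<epsilon> > 0"
  obtains t h T' where "0 \<le> t" "0 \<le> h" "1 - 2*(t+h)*\<sigma>2 > 0"
    "h * noncentral_cgf_deriv \<sigma>2 A ts + noncentral_cgf \<sigma>2 A (t-h) - noncentral_cgf \<sigma>2 A t < 0"
    "noncentral_cgf \<sigma>2 A (t+h) - noncentral_cgf \<sigma>2 A t - h*T' < 0"
    "t*T' - noncentral_cgf \<sigma>2 A t < ts * noncentral_cgf_deriv \<sigma>2 A ts - noncentral_cgf \<sigma>2 A ts + \<epsilon>"
proof -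
  let ?cgf = "noncentral_cgf \<sigma>2 A" and ?cgf' = "noncentral_cgf_deriv \<sigma>2 A"
  define F where "F = (\<lambda>h. (ts+h) * ?cgf' (ts+2*h) - ?cgf (ts+h))"
  have "isCont F 0" unfolding F_def noncentral_cgf_def noncentral_cgf_deriv_def using uts
    by (auto intro!: continuous_intros)
  then have "(F \<longlongrightarrow> F 0) (at_right 0)"
    unfolding isCont_def by (rule filterlim_mono) (auto simp: at_le)
  then have "eventually (\<lambda>h. F h < F 0 + \<epsilon>) (at_right 0)"
    using e by (intro order_tendstoD(2)) auto
  moreover have "eventually (\<lambda>h. h \<in> {0<..<(1 - 2*ts*\<sigma>2) / (6*\<sigma>2)}) (at_right 0)"
    using uts q by (intro eventually_at_right_real) simp
  ultimately have "\<exists>h. F h < F 0 + \<epsilon> \<and> h \<in> {0<..<(1 - 2*ts*\<sigma>2) / (6*\<sigma>2)}"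
    by (intro eventually_happens'[OF _ eventually_conj]) auto
  then obtain h where h: "0 < h" "6*(h*\<sigma>2) < 1 - 2*ts*\<sigma>2" and F: "F h < F 0 + \<epsilon>"
    using q by (auto simp: field_simps)
  have hs: "0 < h*\<sigma>2" using h q by simp
  have u1: "1 - 2*(ts+h)*\<sigma>2 > 0" and u2: "1 - 2*(ts+2*h)*\<sigma>2 > 0"
    using h(2) hs by (simp_all add: algebra_simps)
  have "h * ?cgf' ts < ?cgf (ts+h) - ?cgf ts"
    using noncentral_cgf_increment_bounds(1)[OF q A _ u1, of ts] h by simp
  moreover have "?cgf (ts+2*h) - ?cgf (ts+h) < h * ?cgf' (ts+2*h)"
    using noncentral_cgf_increment_bounds(2)[OF q A _ u2, of "ts+h"] h by simp
  moreover have "ts + h + h = ts + 2*h" by simp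
  ultimately show ?thesis
    using that[of "ts+h" h "?cgf' (ts+2*h)"] ts h u2 F unfolding F_def by (simp add: algebra_simps)
qed

lemma eventually_exp_mult_less:
  fixes g \<epsilon> :: real
  assumes "g < 0" and "\<epsilon> > 0"
  shows "eventually (\<lambda>n. exp (real n * g) < \<epsilon>) sequentially"
proof -
  have "(\<lambda>n. exp g ^ n) \<longlonglongrightarrow> 0" using assms by (intro LIMSEQ_power_zero) auto
  then have "eventually (\<lambda>n. exp g ^ n < \<epsilon>) sequentially" by (rule order_tendstoD(2)) (rule assms(2))
  then show ?thesis by (simp add: exp_of_nat_mult[symmetric])
qed

lemma exp_equiv_exp_linearI:
  fixes E C :: real and g :: "nat \<Rightarrow> real"
  assumes C: "C > 0"
    and upper: "eventually (\<lambda>n. g n \<le> exp (- real n * E)) sequentially"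
    and lower: "\<And>\<epsilon>. \<epsilon> > 0 \<Longrightarrow> eventually (\<lambda>n. C * exp (- real n * (E + \<epsilon>)) \<le> g n) sequentially"
  shows "exp_equiv (\<lambda>n. exp (- real n * E)) g"
  unfolding exp_equiv_def
proof
  show "eventually (\<lambda>n. 0 < exp (- real n * E) \<and> 0 < g n) sequentially"
    using lower[OF zero_less_one] by eventually_elim (metis C exp_gt_zero mult_pos_pos order_less_le_trans)
  show "(\<lambda>n. ln (exp (- real n * E) / g n) / real n) \<longlonglongrightarrow> 0"
  proof (rule tendstoI)
    fix e :: real assume e: "e > 0"
    have "(\<lambda>n. ln C / real n) \<longlonglongrightarrow> 0"
      by (intro tendsto_divide_0[OF tendsto_const] filterlim_at_top_imp_at_infinity
          filterlim_real_sequentially)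
    then have "eventually (\<lambda>n. dist (ln C / real n) 0 < e / 2) sequentially"
      using e by (intro tendstoD) auto
    with lower[OF half_gt_zero[OF e]] upper eventually_ge_at_top[of 1]
    show "eventually (\<lambda>n. dist (ln (exp (- real n * E) / g n) / real n) 0 < e) sequentially"
    proof eventually_elim
      case (elim n)
      then have n: "real n > 0" and lb: "C * exp (- real n * (E + e / 2)) \<le> g n"
        and ub: "g n \<le> exp (- real n * E)" and "dist (ln C / real n) 0 < e / 2" by auto
      then have small: "\<bar>ln C / real n\<bar> < e / 2" by (simp only: dist_real_def diff_zero)
      have g: "0 < g n" using lb C by (smt (verit) exp_gt_zero mult_pos_pos)
      have "0 \<le> ln (exp (- real n * E) / g n)" using ub g by simp
      moreover have "ln (C * exp (- real n * (E + e / 2))) \<le> ln (g n)" using lb g C by simp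
      then have "ln (exp (- real n * E) / g n) \<le> real n * (e / 2) - ln C"
        using g C by (simp add: ln_div ln_mult algebra_simps)
      ultimately have "\<bar>ln (exp (- real n * E) / g n) / real n\<bar> \<le> e / 2 - ln C / real n"
        using n by (simp add: field_simps)
      then have "\<bar>ln (exp (- real n * E) / g n) / real n\<bar> < e"
        using small abs_ge_minus_self[of "ln C / real n"] by linarith
      then show ?case by (simp only: dist_real_def diff_zero)
    qed
  qed
qed

lemma exp_equiv_measure_tail_set:
  fixes \<sigma>2 P c ts T :: real
  assumes q: "\<sigma>2 > 0" and P: "P \<ge> 0" and ts: "0 \<le> ts" and u: "1 - 2*ts*\<sigma>2 > 0"
    and T: "noncentral_cgf_deriv \<sigma>2 (c\<^sup>2*P) ts = T"
  shows "exp_equiv (\<lambda>n. exp (- real n * (ts*T - noncentral_cgf \<sigma>2 (c\<^sup>2*P) ts)))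
    (\<lambda>n. measure (sphere_uniform n (sqrt (real n * P)) \<Otimes>\<^sub>M gauss_vec n \<sigma>2)
           (tail_set n P \<sigma>2 c (sqrt (real n * T))))"
proof (rule exp_equiv_exp_linearI[where C="1/2"])
  let ?cgf = "noncentral_cgf \<sigma>2 (c\<^sup>2*P)"
  let ?Pr = "\<lambda>n. measure (sphere_uniform n (sqrt (real n * P)) \<Otimes>\<^sub>M gauss_vec n \<sigma>2)
           (tail_set n P \<sigma>2 c (sqrt (real n * T)))"
  have A: "c\<^sup>2*P \<ge> 0" using P by simp
  have T0: "T \<ge> 0" using T q u A unfolding noncentral_cgf_deriv_def by auto
  show "eventually (\<lambda>n. ?Pr n \<le> exp (- real n * (ts*T - ?cgf ts))) sequentially"
    using eventually_ge_at_top[of 1] by eventually_elim (rule measure_tail_set_upper[OF q P _ T0 u ts])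
  fix \<epsilon> :: real assume e: "\<epsilon> > 0"
  obtain t h T' where th: "0 \<le> t" "0 \<le> h" "1 - 2*(t+h)*\<sigma>2 > 0"
    and side1: "h * T + ?cgf (t-h) - ?cgf t < 0" and side2: "?cgf (t+h) - ?cgf t - h*T' < 0"
    and near: "t*T' - ?cgf t < ts*T - ?cgf ts + \<epsilon>"
    using obtain_tilt_near_saddle_point[OF q A ts u e] unfolding T by metis
  have quarter: "(0::real) < 1/4" by simp
  show "eventually (\<lambda>n. 1/2 * exp (- real n * (ts*T - ?cgf ts + \<epsilon>)) \<le> ?Pr n) sequentially"
    using eventually_exp_mult_less[OF side1 quarter] eventually_exp_mult_less[OF side2 quarter]
      eventually_ge_at_top[of 1]
  proof eventually_elim
    case (elim n)
    then have "exp (- real n * (t*T' - ?cgf t)) / 2 \<le> ?Pr n"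
      by (intro measure_tail_set_lower[OF q P _ T0 th]) simp_all
    moreover have "exp (- real n * (ts*T - ?cgf ts + \<epsilon>)) \<le> exp (- real n * (t*T' - ?cgf t))"
      using near by (simp add: mult_left_mono)
    ultimately show ?case by linarith
  qed
qed simp

lemma sin_cos_theta:
  fixes R :: real assumes "R \<ge> 0"
  shows "sin (theta R) = exp (- R)" and "(cos (theta R))\<^sup>2 = (exp (2*R) - 1) / exp (2*R)"
proof -
  have lower: "- 1 \<le> exp (- R)" using exp_gt_zero[of "- R"] by linarith
  have upper: "exp (- R) \<le> 1" using assms by simp
  from lower upper show "sin (theta R) = exp (- R)" unfolding theta_def by (rule sin_arcsin)
  have "(exp (- R))\<^sup>2 \<le> 1" using upper by (simp add: power_le_one)
  then have "(cos (theta R))\<^sup>2 = 1 - (exp (- R))\<^sup>2" using lower upper unfolding theta_def by (simp add: cos_arcsin)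
  then show "(cos (theta R))\<^sup>2 = (exp (2*R) - 1) / exp (2*R)"
    by (simp add: field_simps power2_eq_square exp_add[symmetric] exp_minus)
qed

lemma alpha_star_eq:
  assumes "snr > 0" and "cos \<theta> \<noteq> 0"
  shows "sqrt (1 + 4 / (snr * (cos \<theta>)\<^sup>2)) = 2 / alpha_star snr \<theta> - 1"
    and "0 < alpha_star snr \<theta>" and "alpha_star snr \<theta> < 1"
    and "snr * (cos \<theta>)\<^sup>2 * (1 - alpha_star snr \<theta>) = (alpha_star snr \<theta>)\<^sup>2"
proof -
  define D where "D = sqrt (1 + 4 / (snr * (cos \<theta>)\<^sup>2))"
  define \<alpha> where "\<alpha> = alpha_star snr \<theta>"
  have pos: "snr * (cos \<theta>)\<^sup>2 > 0" using assms by simp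
  have D: "D > 1" "D\<^sup>2 = 1 + 4 / (snr * (cos \<theta>)\<^sup>2)" unfolding D_def using pos by simp_all
  have \<alpha>: "\<alpha> = 2 / (1 + D)" unfolding \<alpha>_def alpha_star_def D_def by (simp add: inverse_eq_divide)
  show "0 < alpha_star snr \<theta>" "alpha_star snr \<theta> < 1" using \<alpha> D unfolding \<alpha>_def by simp_all
  have D\<alpha>: "D = 2 / \<alpha> - 1" using \<alpha> D \<open>0 < alpha_star snr \<theta>\<close> unfolding \<alpha>_def[symmetric]
    by (simp add: field_simps)
  then show "sqrt (1 + 4 / (snr * (cos \<theta>)\<^sup>2)) = 2 / alpha_star snr \<theta> - 1" unfolding D_def \<alpha>_def .
  have KD: "snr * (cos \<theta>)\<^sup>2 * (D\<^sup>2 - 1) = 4" using D(2) assms by simp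
  have "snr * (cos \<theta>)\<^sup>2 * (1 - \<alpha>) * (1 + D)\<^sup>2 = snr * (cos \<theta>)\<^sup>2 * (D\<^sup>2 - 1)"
    unfolding \<alpha> using D(1) by (simp add: field_simps power2_eq_square)
  also have "\<dots> = \<alpha>\<^sup>2 * (1 + D)\<^sup>2" unfolding KD \<alpha> using D(1) by (simp add: power_divide)
  finally show "snr * (cos \<theta>)\<^sup>2 * (1 - alpha_star snr \<theta>) = (alpha_star snr \<theta>)\<^sup>2"
    using D(1) unfolding \<alpha>_def[symmetric] by simp
qed

lemma E_sp_eq:
  assumes snr: "snr > 0" and R: "R > 0"
  defines "\<alpha> \<equiv> alpha_star snr (theta R)" and "\<beta> \<equiv> exp (2*R)"
  shows "E_sp R snr = ((1 - \<beta>) * snr / (\<beta> * \<alpha>) + snr + ln (\<beta> * (1 - \<alpha>))) / 2"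
proof -
  have \<beta>: "\<beta> > 1" unfolding \<beta>_def using R by simp
  have cos: "(cos (theta R))\<^sup>2 = (\<beta> - 1) / \<beta>"
    using sin_cos_theta(2)[of R] R unfolding \<beta>_def by simp
  then have "cos (theta R) \<noteq> 0" using \<beta> by auto
  note \<alpha> = alpha_star_eq[OF snr this, folded \<alpha>_def]
  have "4 / (snr * (cos (theta R))\<^sup>2) = 4 * \<beta> / (snr * (\<beta> - 1))"
    unfolding cos using \<beta> by simp
  then have D: "sqrt (1 + 4 * beta_G R / (snr * (beta_G R - 1))) = 2 / \<alpha> - 1"
    using \<alpha>(1) unfolding beta_G_def \<beta>_def[symmetric] by simp
  have \<rho>: "1 + rho_G snr R = snr / (\<beta> * \<alpha>)"
    unfolding rho_G_def D unfolding beta_G_def \<beta>_def[symmetric] using \<alpha>(2) \<beta> by (simp add: field_simps)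
  have "snr / (1 + rho_G snr R) = \<beta> * \<alpha>" using \<rho> snr \<alpha>(2) \<beta> by simp
  moreover have "ln \<beta> = 2 * R" unfolding \<beta>_def by simp
  ultimately show ?thesis
    unfolding E_sp_def E_G_def beta_G_def \<beta>_def[symmetric] unfolding \<rho>
    by (simp add: algebra_simps)
qed

text \<open>With \<open>\<beta> = e\<^sup>2\<^sup>R\<close>, the hypothesis \<open>\<beta> < 1 + snr\<close> is \<open>R < C\<close>; the conclusion makes the
  optimal tilt \<open>(1 - \<beta> (1 - \<alpha>)) / (2 \<sigma>\<^sup>2)\<close> positive.\<close>

lemma beta_mult_one_minus_alpha_less_one:
  fixes snr \<alpha> \<beta> :: real
  assumes \<alpha>: "0 < \<alpha>" and \<beta>: "1 < \<beta>" "\<beta> < 1 + snr"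
    and root: "snr * (\<beta> - 1) * (1 - \<alpha>) = \<beta> * \<alpha>\<^sup>2"
  shows "\<beta> * (1 - \<alpha>) < 1"
proof (rule ccontr)
  assume "\<not> \<beta> * (1 - \<alpha>) < 1"
  then have u: "1 \<le> \<beta> * (1 - \<alpha>)" by simp
  then have \<beta>\<alpha>: "\<beta> * \<alpha> \<le> \<beta> - 1" by (simp add: algebra_simps)
  have "(\<beta> - 1) * (snr * (1 - \<alpha>)) = \<alpha> * (\<beta> * \<alpha>)"
    using root by (simp add: power2_eq_square algebra_simps)
  also have "\<dots> \<le> \<alpha> * (\<beta> - 1)" using \<beta>\<alpha> \<alpha> by (intro mult_left_mono) simp_all
  finally have "(\<beta> - 1) * (snr * (1 - \<alpha>)) \<le> (\<beta> - 1) * \<alpha>" by (simp add: mult.commute)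
  then have "snr * (1 - \<alpha>) \<le> \<alpha>" using \<beta> by simp
  then have "\<beta> * (snr * (1 - \<alpha>)) \<le> \<beta> * \<alpha>" using \<beta> by (intro mult_left_mono) simp_all
  moreover have "snr * 1 \<le> snr * (\<beta> * (1 - \<alpha>))" using u \<beta> by (intro mult_left_mono) simp_all
  then have "snr \<le> \<beta> * (snr * (1 - \<alpha>))" by (simp add: mult.left_commute)
  ultimately show False using \<beta>\<alpha> \<beta> by linarith
qed

lemma noncentral_cgf_saddle_point_identities:
  fixes \<sigma>2 P \<alpha> \<beta> :: real
  assumes q: "\<sigma>2 > 0" and \<alpha>: "0 < \<alpha>" "\<alpha> < 1" and \<beta>: "1 < \<beta>"
    and root: "P * (\<beta> - 1) * (1 - \<alpha>) = \<sigma>2 * (\<beta> * \<alpha>\<^sup>2)"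
  defines "u \<equiv> \<beta> * (1 - \<alpha>)" and "A \<equiv> ((1 - \<alpha>) / \<alpha>)\<^sup>2 * P"
  defines "ts \<equiv> (1 - u) / (2 * \<sigma>2)"
  shows "noncentral_cgf_deriv \<sigma>2 A ts = P / (\<beta> * \<alpha>\<^sup>2)"
    and "ts * (P / (\<beta> * \<alpha>\<^sup>2)) - noncentral_cgf \<sigma>2 A ts
         = ((1 - \<beta>) * (P / \<sigma>2) / (\<beta> * \<alpha>) + P / \<sigma>2 + ln u) / 2"
proof -
  have uts: "1 - 2*ts*\<sigma>2 = u" unfolding ts_def using q by (simp add: field_simps)
  have w: "1 - \<alpha> \<noteq> 0" using \<alpha> by simp
  have \<sigma>2: "\<sigma>2 = P * (\<beta> - 1) * (1 - \<alpha>) / (\<beta> * \<alpha>\<^sup>2)" using root \<alpha> \<beta> by (simp add: field_simps)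
  have A_u: "A / u\<^sup>2 = P / (\<alpha>\<^sup>2 * \<beta>\<^sup>2)"
  proof -
    have cancel: "(w / \<alpha>)\<^sup>2 * P / (\<beta> * w)\<^sup>2 = P / (\<alpha>\<^sup>2 * \<beta>\<^sup>2)" if "w \<noteq> 0" for w
      using that \<alpha> \<beta> by (simp add: field_simps power2_eq_square)
    show ?thesis unfolding A_def u_def by (rule cancel[OF w])
  qed
  have \<sigma>2_u: "\<sigma>2 / u = P * (\<beta> - 1) / (\<beta>\<^sup>2 * \<alpha>\<^sup>2)"
  proof -
    have cancel: "P * (\<beta> - 1) * w / (\<beta> * \<alpha>\<^sup>2) / (\<beta> * w) = P * (\<beta> - 1) / (\<beta>\<^sup>2 * \<alpha>\<^sup>2)"
      if "w \<noteq> 0" for w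
      using that \<alpha> \<beta> by (simp add: field_simps power2_eq_square)
    show ?thesis unfolding u_def by (subst \<sigma>2) (rule cancel[OF w])
  qed
  show "noncentral_cgf_deriv \<sigma>2 A ts = P / (\<beta> * \<alpha>\<^sup>2)"
    unfolding noncentral_cgf_deriv_def uts A_u \<sigma>2_u using \<alpha> \<beta> by (simp add: field_simps power2_eq_square)
  have "P / (\<beta> * \<alpha>\<^sup>2) - A / u = P / (\<alpha> * \<beta>)"
    unfolding A_def u_def using w \<alpha> \<beta> by (simp add: field_simps power2_eq_square)
  moreover have "ts * (P / (\<alpha> * \<beta>)) = ((1 - \<beta>) * (P / \<sigma>2) / (\<beta> * \<alpha>) + P / \<sigma>2) / 2"
    unfolding ts_def u_def using \<alpha> \<beta> q by (simp add: field_simps)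
  ultimately show "ts * (P / (\<beta> * \<alpha>\<^sup>2)) - noncentral_cgf \<sigma>2 A ts
      = ((1 - \<beta>) * (P / \<sigma>2) / (\<beta> * \<alpha>) + P / \<sigma>2 + ln u) / 2"
    unfolding noncentral_cgf_def uts by (simp add: algebra_simps)
qed

lemma alpha_star_saddle_point:
  fixes P \<sigma>2 R :: real
  assumes P: "P > 0" and q: "\<sigma>2 > 0" and R: "0 < R" "R < ln (1 + P / \<sigma>2) / 2"
  defines "\<alpha> \<equiv> alpha_star (P / \<sigma>2) (theta R)"
  defines "ts \<equiv> (1 - exp (2*R) * (1 - \<alpha>)) / (2 * \<sigma>2)" and "T \<equiv> P * (sin (theta R) / \<alpha>)\<^sup>2"
  shows "0 < \<alpha>" and "0 \<le> ts" and "1 - 2*ts*\<sigma>2 > 0"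
    and "noncentral_cgf_deriv \<sigma>2 (((1 - \<alpha>) / \<alpha>)\<^sup>2 * P) ts = T"
    and "ts * T - noncentral_cgf \<sigma>2 (((1 - \<alpha>) / \<alpha>)\<^sup>2 * P) ts = E_sp R (P / \<sigma>2)"
proof -
  define \<beta> where "\<beta> = exp (2*R)"
  have snr: "P / \<sigma>2 > 0" using P q by simp
  have \<beta>: "1 < \<beta>" "\<beta> < 1 + P / \<sigma>2"
  proof -
    have "exp (2*R) < exp (ln (1 + P / \<sigma>2))" using R(2) by simp
    then show "1 < \<beta>" "\<beta> < 1 + P / \<sigma>2" using R(1) snr unfolding \<beta>_def by simp_all
  qed
  have cos: "(cos (theta R))\<^sup>2 = (\<beta> - 1) / \<beta>"
    using sin_cos_theta(2)[of R] R unfolding \<beta>_def by simp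
  then have "cos (theta R) \<noteq> 0" using \<beta> by auto
  note \<alpha> = alpha_star_eq(2-4)[OF snr this, folded \<alpha>_def]
  have root: "P * (\<beta> - 1) * (1 - \<alpha>) = \<sigma>2 * (\<beta> * \<alpha>\<^sup>2)"
    using \<alpha>(3) \<beta> q unfolding cos by (simp add: field_simps)
  have "P / \<sigma>2 * (\<beta> - 1) * (1 - \<alpha>) = \<beta> * \<alpha>\<^sup>2" using root q by (simp add: field_simps)
  then have u: "0 < \<beta> * (1 - \<alpha>)" "\<beta> * (1 - \<alpha>) < 1"
    using \<alpha> \<beta> beta_mult_one_minus_alpha_less_one by simp_all
  have T: "T = P / (\<beta> * \<alpha>\<^sup>2)"
    unfolding T_def sin_cos_theta(1)[OF less_imp_le[OF R(1)]] \<beta>_def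
    by (simp add: power_divide power2_eq_square exp_add[symmetric] exp_minus field_simps)
  have ts: "ts = (1 - \<beta> * (1 - \<alpha>)) / (2 * \<sigma>2)" unfolding ts_def \<beta>_def ..
  note saddle = noncentral_cgf_saddle_point_identities[OF q \<alpha>(1,2) \<beta>(1) root]
  show "0 < \<alpha>" by (rule \<alpha>(1))
  show "0 \<le> ts" "1 - 2*ts*\<sigma>2 > 0" using u q unfolding ts by simp_all
  show "noncentral_cgf_deriv \<sigma>2 (((1 - \<alpha>) / \<alpha>)\<^sup>2 * P) ts = T"
    unfolding ts T by (rule saddle(1))
  show "ts * T - noncentral_cgf \<sigma>2 (((1 - \<alpha>) / \<alpha>)\<^sup>2 * P) ts = E_sp R (P / \<sigma>2)"
    unfolding ts T saddle(2) E_sp_eq[OF snr R(1)] \<alpha>_def[symmetric] \<beta>_def[symmetric] ..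
qed

theorem lemma1:
  fixes P \<sigma>2 R :: real
  assumes "P > 0" and "\<sigma>2 > 0" and "0 < R" and "R < ln (1 + P / \<sigma>2) / 2"
  shows "exp_equiv
     (\<lambda>n. exp (- real n * E_sp R (P / \<sigma>2)))
     (\<lambda>n. let a = alpha_star (P / \<sigma>2) (theta R) in
        measure (sphere_uniform n (sqrt (real n * P)) \<Otimes>\<^sub>M gauss_vec n \<sigma>2)
          {(b, z) \<in> space (sphere_uniform n (sqrt (real n * P)) \<Otimes>\<^sub>M gauss_vec n \<sigma>2).
             enorm n (\<lambda>i. (1 - a) / a * b i + z i) \<ge> sqrt (real n * P) / a * sin (theta R)})"
proof -
  define \<alpha> where "\<alpha> = alpha_star (P / \<sigma>2) (theta R)"
  define ts where "ts = (1 - exp (2*R) * (1 - \<alpha>)) / (2 * \<sigma>2)"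
  define T where "T = P * (sin (theta R) / \<alpha>)\<^sup>2"
  note saddle = alpha_star_saddle_point[OF assms, folded \<alpha>_def, folded ts_def T_def]
  have threshold: "sqrt (real n * P) / \<alpha> * sin (theta R) = sqrt (real n * T)" for n
  proof -
    have "0 < sin (theta R)" using assms(3) by (simp add: sin_cos_theta(1))
    then show ?thesis using saddle(1)
      unfolding T_def mult.assoc[symmetric] real_sqrt_mult[of _ "(_)\<^sup>2"] by simp
  qed
  have "exp_equiv (\<lambda>n. exp (- real n * (ts * T - noncentral_cgf \<sigma>2 (((1 - \<alpha>) / \<alpha>)\<^sup>2 * P) ts)))
     (\<lambda>n. measure (sphere_uniform n (sqrt (real n * P)) \<Otimes>\<^sub>M gauss_vec n \<sigma>2)
            (tail_set n P \<sigma>2 ((1 - \<alpha>) / \<alpha>) (sqrt (real n * T))))"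
    using assms(1,2) saddle(2-4) by (intro exp_equiv_measure_tail_set) simp_all
  then show ?thesis
    unfolding saddle(5) tail_set_def threshold[symmetric] unfolding \<alpha>_def Let_def .
qed

end
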